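(* For every problem size $(n,m)$, the sets $\chi\mathrm{MF}$ and $\chi\mathrm{SP}\cup\chi\mathrm{MF}$ are closed subsets of $\mathrm{JSP}(n,m)$, and $\chi\mathrm{MF}\subset\overline{\chi\mathrm{SP}}$; consequently $\overline{\chi\mathrm{SP}}=\chi\mathrm{SP}\cup\chi\mathrm{MF}$.
   Context: Jet space: $\mathrm{JSP}(n,m)=\mathbb R^{nm_\le+m_\le+nm_=+m_=+n}$ with elements $\sigma=((a_i,\alpha_i)_{i=1..m_\le},(b_j,\beta_j)_{j=1..m_=},a_{m_\le^*})$, $a_i,b_j,a_{m_\le^*}\in\mathbb R^n$, $\alpha_i,\beta_j\in\mathbb R$, $m_\le^*:=m_\le+1$. Let $I_0(\sigma)=\{i\le m_\le:\alpha_i=0\}$, $I_0^*=I_0\cup\{m_\le^*\}$, and $C(\sigma)$ the set of $(\mu,\lambda)\in[0,\infty)^{m_\le^*}\times\mathbb R^{m_=}$ such that $\alpha_i\le0$ for all $i$, $\mu_i=0$ for $i\notin I_0^*$, and $\sum_i\mu_ia_i+\sum_j\lambda_jb_j=0$ (so $C(\sigma)=\emptyset$ if some $\alpha_i>0$). $\mathcal I(\sigma)$ is the set of pairs $(I,J)$, $I\subset I_0^*$, $J\subset\{1..m_=\}$, with $I\dot\cup J\ne\emptyset$, admitting $(\mu,\lambda)\in C(\sigma)$ with $\mu_i>0$ ($i\in I$), $\lambda_j\ne0$ ($j\in J$), and inclusion-minimal (for $I\dot\cup J$) among such pairs. $\mathcal I^{SP}(\sigma)=\{(I,J)\in\mathcal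 I(\sigma): m_\le^*\in I\}$, $\mathcal I^{MF}=\mathcal I\setminus\mathcal I^{SP}$. $\chi\mathrm{SP}=\{\sigma:\mathcal I^{SP}(\sigma)\ne\emptyset\}$, $\chi\mathrm{MF}=\{\sigma:\mathcal I^{MF}(\sigma)\ne\emptyset\}$. *)

theory Defs
  imports "HOL-Analysis.Analysis"
begin

text \<open>A jet sigma = (a, alpha, b, beta) with
  a :: nat => real^'n  (a i for i in {1..ml}, and a (ml+1) is a_{m_le^*}),
  alpha :: nat => real (indices 1..ml), b :: nat => real^'n, beta :: nat => real (indices 1..me).
  All components outside their index range are 0, so JSP is a copy of the Euclidean space
  R^{n ml + ml + n me + me + n} inside the product space (with product topology).\<close>

type_synonym 'n jet = "(nat \<Rightarrow> real^'n) \<times> (nat \<Rightarrow> real) \<times> (nat \<Rightarrow> real^'n) \<times> (nat \<Rightarrow> real)"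

definition JSP :: "nat \<Rightarrow> nat \<Rightarrow> ('n::finite) jet set" where
  "JSP ml me = {(a, al, b, be).
      (\<forall>i. i \<notin> {1..ml+1} \<longrightarrow> a i = 0) \<and> (\<forall>i. i \<notin> {1..ml} \<longrightarrow> al i = 0) \<and>
      (\<forall>j. j \<notin> {1..me} \<longrightarrow> b j = 0 \<and> be j = 0)}"

definition I0 :: "nat \<Rightarrow> ('n::finite) jet \<Rightarrow> nat set" where
  "I0 ml \<sigma> = {i \<in> {1..ml}. fst (snd \<sigma>) i = 0}"

definition I0star :: "nat \<Rightarrow> ('n::finite) jet \<Rightarrow> nat set" where
  "I0star ml \<sigma> = I0 ml \<sigma> \<union> {ml + 1}"

definition Ccone :: "nat \<Rightarrow> nat \<Rightarrow> ('n::finite) jet \<Rightarrow> ((nat \<Rightarrow> real) \<times> (nat \<Rightarrow> real)) set" where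
  "Ccone ml me \<sigma> = (case \<sigma> of (a, al, b, be) \<Rightarrow>
     {(mu, la). (\<forall>i\<in>{1..ml}. al i \<le> 0) \<and> (\<forall>i. 0 \<le> mu i) \<and>
        (\<forall>i. i \<notin> I0star ml \<sigma> \<longrightarrow> mu i = 0) \<and> (\<forall>j. j \<notin> {1..me} \<longrightarrow> la j = 0) \<and>
        (\<Sum>i=1..ml+1. mu i *\<^sub>R a i) + (\<Sum>j=1..me. la j *\<^sub>R b j) = 0})"

definition admits :: "nat \<Rightarrow> nat \<Rightarrow> ('n::finite) jet \<Rightarrow> nat set \<Rightarrow> nat set \<Rightarrow> bool" where
  "admits ml me \<sigma> I J \<longleftrightarrow> I \<subseteq> I0star ml \<sigma> \<and> J \<subseteq> {1..me} \<and> (I \<noteq> {} \<or> J \<noteq> {}) \<and>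
     (\<exists>(mu, la) \<in> Ccone ml me \<sigma>. (\<forall>i \<in> I0star ml \<sigma>. 0 < mu i \<longleftrightarrow> i \<in> I) \<and>
                                 (\<forall>j \<in> {1..me}. la j \<noteq> 0 \<longleftrightarrow> j \<in> J))"

definition Iset :: "nat \<Rightarrow> nat \<Rightarrow> ('n::finite) jet \<Rightarrow> (nat set \<times> nat set) set" where
  "Iset ml me \<sigma> = {(I, J). admits ml me \<sigma> I J \<and>
      (\<forall>I' J'. admits ml me \<sigma> I' J' \<and> I' \<subseteq> I \<and> J' \<subseteq> J \<longrightarrow> I' = I \<and> J' = J)}"

definition ISP :: "nat \<Rightarrow> nat \<Rightarrow> ('n::finite) jet \<Rightarrow> (nat set \<times> nat set) set" where
  "ISP ml me \<sigma> = {(I, J) \<in> Iset ml me \<sigma>. ml + 1 \<in> I}"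

definition IMF :: "nat \<Rightarrow> nat \<Rightarrow> ('n::finite) jet \<Rightarrow> (nat set \<times> nat set) set" where
  "IMF ml me \<sigma> = Iset ml me \<sigma> - ISP ml me \<sigma>"

definition chiSP :: "nat \<Rightarrow> nat \<Rightarrow> ('n::finite) jet set" where
  "chiSP ml me = {\<sigma> \<in> JSP ml me. ISP ml me \<sigma> \<noteq> {}}"

definition chiMF :: "nat \<Rightarrow> nat \<Rightarrow> ('n::finite) jet set" where
  "chiMF ml me = {\<sigma> \<in> JSP ml me. IMF ml me \<sigma> \<noteq> {}}"

end

theory Submission
  imports Defs
begin

text \<open>The conditions defining \<open>C(\<sigma>)\<close> become closed in \<open>(\<sigma>, \<mu>, \<lambda>)\<close> once membership in \<open>I\<^sub>0\<^sup>*\<close>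
  is expressed by complementarity \<open>\<mu>\<^sub>i \<alpha>\<^sub>i = 0\<close>. Passing to support-minimal multipliers shows that
  \<open>\<I>(\<sigma>)\<close> is nonempty iff \<open>C(\<sigma>)\<close> has a nonzero element, \<open>\<I>\<^sup>M\<^sup>F(\<sigma>)\<close> iff it has one with
  \<open>\<mu>\<^sub>m\<^sub>*= 0\<close>, and \<open>\<I>\<^sup>S\<^sup>P(\<sigma>)\<close> iff it has one with \<open>\<mu>\<^sub>m\<^sub>* > 0\<close>. Normalising the multipliers
  to a compact \<open>l\<^sub>1\<close>-sphere exhibits \<open>\<chi>MF\<close> and \<open>\<chi>SP \<union> \<chi>MF\<close> as projections of closed sets along a
  compact factor, hence as closed sets. Finally, if \<open>\<sigma> \<in> \<chi>MF\<close> has a multiplier \<open>(\<mu>, \<lambda>)\<close> with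
  \<open>\<mu>\<^sub>m\<^sub>* = 0\<close>, shifting a gradient with nonzero multiplier by a small multiple of \<open>a\<^sub>m\<^sub>*\<close> gives
  jets in \<open>\<chi>SP\<close> converging to \<open>\<sigma>\<close>.\<close>

lemma I0star_subset: "I0star ml \<sigma> \<subseteq> {1..ml+1}"
  by (auto simp: I0star_def I0_def)

lemma Ccone_iff:
  "(mu, la) \<in> Ccone ml me (a, al, b, be) \<longleftrightarrow>
     (\<forall>i\<in>{1..ml}. al i \<le> 0) \<and> (\<forall>i. 0 \<le> mu i) \<and>
     (\<forall>i. i \<notin> I0star ml (a, al, b, be) \<longrightarrow> mu i = 0) \<and> (\<forall>j. j \<notin> {1..me} \<longrightarrow> la j = 0) \<and>
     (\<Sum>i=1..ml+1. mu i *\<^sub>R a i) + (\<Sum>j=1..me. la j *\<^sub>R b j) = 0"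
  by (simp add: Ccone_def)

lemma Ccone_D:
  assumes "(mu, la) \<in> Ccone ml me \<sigma>"
  shows Ccone_nonneg: "0 \<le> mu i"
    and Ccone_mu_support: "mu i \<noteq> 0 \<Longrightarrow> i \<in> I0star ml \<sigma>"
    and Ccone_la_support: "la j \<noteq> 0 \<Longrightarrow> j \<in> {1..me}"
  using assms by (cases \<sigma>; auto simp: Ccone_iff)+

lemma finite_Ccone_support:
  assumes "(mu, la) \<in> Ccone ml me \<sigma>"
  shows "finite {i. mu i \<noteq> 0}" and "finite {j. la j \<noteq> 0}"
proof -
  have "{i. mu i \<noteq> 0} \<subseteq> {1..ml+1}"
    using Ccone_mu_support[OF assms] I0star_subset by blast
  then show "finite {i. mu i \<noteq> 0}" by (rule finite_subset) simp
  have "{j. la j \<noteq> 0} \<subseteq> {1..me}"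
    using Ccone_la_support[OF assms] by blast
  then show "finite {j. la j \<noteq> 0}" by (rule finite_subset) simp
qed

lemma Ccone_lincomb:
  assumes "(mu, la) \<in> Ccone ml me \<sigma>" "(nu, ka) \<in> Ccone ml me \<sigma>"
    and "\<And>i. 0 \<le> s * mu i + t * nu i"
  shows "(\<lambda>i. s * mu i + t * nu i, \<lambda>j. s * la j + t * ka j) \<in> Ccone ml me \<sigma>"
proof -
  obtain a al b be where \<sigma>: "\<sigma> = (a, al, b, be)" by (cases \<sigma>)
  have "(\<Sum>i=1..ml+1. (s * mu i + t * nu i) *\<^sub>R a i) + (\<Sum>j=1..me. (s * la j + t * ka j) *\<^sub>R b j)
      = s *\<^sub>R ((\<Sum>i=1..ml+1. mu i *\<^sub>R a i) + (\<Sum>j=1..me. la j *\<^sub>R b j))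
        + t *\<^sub>R ((\<Sum>i=1..ml+1. nu i *\<^sub>R a i) + (\<Sum>j=1..me. ka j *\<^sub>R b j))"
    by (simp add: scaleR_add_left sum.distrib scaleR_right.sum scaleR_add_right algebra_simps)
  then show ?thesis
    using assms unfolding \<sigma> Ccone_iff by auto
qed

lemma Ccone_reduce_support:
  assumes x: "(mu, la) \<in> Ccone ml me \<sigma>" and y: "(nu, ka) \<in> Ccone ml me \<sigma>"
    and nz: "(\<exists>i. nu i \<noteq> 0) \<or> (\<exists>j. ka j \<noteq> 0)"
  obtains t where "(\<lambda>i. mu i - t * nu i, \<lambda>j. la j - t * ka j) \<in> Ccone ml me \<sigma>"
    and "(\<exists>i. nu i \<noteq> 0 \<and> mu i = t * nu i) \<or> (\<exists>j. ka j \<noteq> 0 \<and> la j = t * ka j)"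
proof -
  have step: "(\<lambda>i. mu i - t * nu i, \<lambda>j. la j - t * ka j) \<in> Ccone ml me \<sigma>"
    if "\<And>i. 0 \<le> mu i - t * nu i" for t
    using Ccone_lincomb[OF x y, of 1 "- t"] that by simp
  show thesis
  proof (cases "\<exists>i. nu i \<noteq> 0")
    case True
    \<comment> \<open>ratio test: the largest step keeping \<open>mu - t * nu\<close> nonnegative\<close>
    define R where "R = (\<lambda>i. mu i / nu i) ` {i. nu i \<noteq> 0}"
    have "finite R" "R \<noteq> {}"
      using finite_Ccone_support(1)[OF y] True by (auto simp: R_def)
    then have "Min R \<in> R" by (rule Min_in)
    then obtain k where k: "nu k \<noteq> 0" "Min R = mu k / nu k"
      unfolding R_def by blast
    have "0 \<le> mu i - Min R * nu i" for i
    proof (cases "nu i = 0")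
      case True
      then show ?thesis using Ccone_nonneg[OF x] by simp
    next
      case False
      then have "0 < nu i" using Ccone_nonneg[OF y, of i] by simp
      moreover have "Min R \<le> mu i / nu i"
        using \<open>finite R\<close> False by (auto simp: R_def)
      ultimately show ?thesis by (simp add: field_simps)
    qed
    moreover have "mu k = Min R * nu k" using k by simp
    ultimately show thesis using k by (intro that[OF step]) blast+
  next
    case False
    with nz obtain j where "ka j \<noteq> 0" by blast
    moreover have "\<And>i. 0 \<le> mu i - la j / ka j * nu i"
      using False Ccone_nonneg[OF x] by simp
    ultimately show thesis by (intro that[of "la j / ka j"] step) auto
  qed
qed

lemma admits_iff_support:
  "admits ml me \<sigma> I J \<longleftrightarrow>
     (\<exists>mu la. (mu, la) \<in> Ccone ml me \<sigma> \<and> ((\<exists>i. mu i \<noteq> 0) \<or> (\<exists>j. la j \<noteq> 0)) \<and>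
        I = {i. mu i \<noteq> 0} \<and> J = {j. la j \<noteq> 0})"
proof
  assume "admits ml me \<sigma> I J"
  then obtain mu la where adm: "I \<subseteq> I0star ml \<sigma>" "J \<subseteq> {1..me}" "I \<noteq> {} \<or> J \<noteq> {}"
      "(mu, la) \<in> Ccone ml me \<sigma>" "\<forall>i \<in> I0star ml \<sigma>. 0 < mu i \<longleftrightarrow> i \<in> I"
      "\<forall>j \<in> {1..me}. la j \<noteq> 0 \<longleftrightarrow> j \<in> J"
    unfolding admits_def by auto
  have "i \<in> I \<longleftrightarrow> mu i \<noteq> 0" for i
    using adm(1,5) Ccone_mu_support[OF adm(4), of i] Ccone_nonneg[OF adm(4), of i]
    by (auto simp: less_le)
  then have "I = {i. mu i \<noteq> 0}" by blast
  moreover have "J = {j. la j \<noteq> 0}"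
    using adm(2,6) Ccone_la_support[OF adm(4)] by blast
  ultimately show "\<exists>mu la. (mu, la) \<in> Ccone ml me \<sigma> \<and> ((\<exists>i. mu i \<noteq> 0) \<or> (\<exists>j. la j \<noteq> 0)) \<and>
        I = {i. mu i \<noteq> 0} \<and> J = {j. la j \<noteq> 0}"
    using adm(3,4) by blast
next
  assume "\<exists>mu la. (mu, la) \<in> Ccone ml me \<sigma> \<and> ((\<exists>i. mu i \<noteq> 0) \<or> (\<exists>j. la j \<noteq> 0)) \<and>
        I = {i. mu i \<noteq> 0} \<and> J = {j. la j \<noteq> 0}"
  then obtain mu la where x: "(mu, la) \<in> Ccone ml me \<sigma>" "(\<exists>i. mu i \<noteq> 0) \<or> (\<exists>j. la j \<noteq> 0)"
      and IJ: "I = {i. mu i \<noteq> 0}" "J = {j. la j \<noteq> 0}"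
    by blast
  have "\<forall>i \<in> I0star ml \<sigma>. 0 < mu i \<longleftrightarrow> i \<in> I"
    using Ccone_nonneg[OF x(1)] by (auto simp: IJ less_le)
  moreover have "\<forall>j \<in> {1..me}. la j \<noteq> 0 \<longleftrightarrow> j \<in> J" by (simp add: IJ)
  moreover have "I \<subseteq> I0star ml \<sigma>" "J \<subseteq> {1..me}" "I \<noteq> {} \<or> J \<noteq> {}"
    using x Ccone_mu_support[OF x(1)] Ccone_la_support[OF x(1)] by (auto simp: IJ)
  ultimately show "admits ml me \<sigma> I J"
    unfolding admits_def using x(1) by blast
qed

lemma card_add_card_less:
  assumes "finite I" "finite J" "I' \<subseteq> I" "J' \<subseteq> J" "\<not> (I' = I \<and> J' = J)"
  shows "card I' + card J' < card I + card J"
proof (cases "I' = I")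
  case True
  with assms have "card J' < card J" by (intro psubset_card_mono) auto
  with True show ?thesis by simp
next
  case False
  with assms have "card I' < card I" by (intro psubset_card_mono) auto
  moreover have "card J' \<le> card J" using assms by (intro card_mono)
  ultimately show ?thesis by simp
qed

lemma admits_finite:
  assumes "admits ml me \<sigma> I J"
  shows "finite I \<and> finite J"
proof -
  have "I \<subseteq> {1..ml+1}" "J \<subseteq> {1..me}"
    using assms I0star_subset[of ml \<sigma>] unfolding admits_def by blast+
  then show ?thesis by (auto intro: finite_subset)
qed

lemma obtain_minimal_admits:
  assumes "admits ml me \<sigma> I J" "P I J"
  obtains I' J' where "admits ml me \<sigma> I' J'" "P I' J'" "I' \<subseteq> I" "J' \<subseteq> J"
    and "\<And>I'' J''. admits ml me \<sigma> I'' J'' \<Longrightarrow> P I'' J'' \<Longrightarrow> I'' \<subseteq> I' \<Longrightarrow> J'' \<subseteq> J'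
           \<Longrightarrow> I'' = I' \<and> J'' = J'"
proof -
  define Q where "Q p \<longleftrightarrow> admits ml me \<sigma> (fst p) (snd p) \<and> P (fst p) (snd p) \<and> fst p \<subseteq> I \<and> snd p \<subseteq> J"
    for p
  have "Q (I, J)" using assms by (simp add: Q_def)
  then obtain p where p: "Q p" and least: "\<And>q. Q q \<Longrightarrow> card (fst p) + card (snd p) \<le> card (fst q) + card (snd q)"
    using ex_has_least_nat[of Q "(I, J)" "\<lambda>p. card (fst p) + card (snd p)"] by blast
  obtain I' J' where p_eq: "p = (I', J')" by (cases p)
  have fin: "finite I'" "finite J'"
    using p admits_finite[of ml me \<sigma> I' J'] by (simp_all add: Q_def p_eq)
  show thesis
  proof (rule that)
    show "admits ml me \<sigma> I' J'" "P I' J'" "I' \<subseteq> I" "J' \<subseteq> J" using p by (auto simp: Q_def p_eq)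
    fix I'' J'' assume "admits ml me \<sigma> I'' J''" "P I'' J''" and sub: "I'' \<subseteq> I'" "J'' \<subseteq> J'"
    with p have "card I' + card J' \<le> card I'' + card J''"
      using least[of "(I'', J'')"] by (auto simp: Q_def p_eq)
    then show "I'' = I' \<and> J'' = J'"
      using card_add_card_less[OF fin sub] by linarith
  qed
qed

lemma Iset_below_admits:
  assumes "admits ml me \<sigma> I J"
  obtains I' J' where "(I', J') \<in> Iset ml me \<sigma>" "I' \<subseteq> I" "J' \<subseteq> J"
proof (rule obtain_minimal_admits[of ml me \<sigma> I J "\<lambda>_ _. True", OF assms TrueI])
  fix I' J'
  assume "admits ml me \<sigma> I' J'" "I' \<subseteq> I" "J' \<subseteq> J"
    and "\<And>I'' J''. admits ml me \<sigma> I'' J'' \<Longrightarrow> True \<Longrightarrow> I'' \<subseteq> I' \<Longrightarrow> J'' \<subseteq> J'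
           \<Longrightarrow> I'' = I' \<and> J'' = J'"
  then have "(I', J') \<in> Iset ml me \<sigma>" unfolding Iset_def by blast
  then show thesis using \<open>I' \<subseteq> I\<close> \<open>J' \<subseteq> J\<close> by (rule that)
qed

lemma Iset_nonempty_iff:
  "Iset ml me \<sigma> \<noteq> {} \<longleftrightarrow>
     (\<exists>mu la. (mu, la) \<in> Ccone ml me \<sigma> \<and> ((\<exists>i. mu i \<noteq> 0) \<or> (\<exists>j. la j \<noteq> 0)))"
proof
  assume "Iset ml me \<sigma> \<noteq> {}"
  then obtain I J where "admits ml me \<sigma> I J" by (auto simp: Iset_def)
  then show "\<exists>mu la. (mu, la) \<in> Ccone ml me \<sigma> \<and> ((\<exists>i. mu i \<noteq> 0) \<or> (\<exists>j. la j \<noteq> 0))"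
    by (auto simp: admits_iff_support)
next
  assume "\<exists>mu la. (mu, la) \<in> Ccone ml me \<sigma> \<and> ((\<exists>i. mu i \<noteq> 0) \<or> (\<exists>j. la j \<noteq> 0))"
  then obtain mu la where "(mu, la) \<in> Ccone ml me \<sigma>" "(\<exists>i. mu i \<noteq> 0) \<or> (\<exists>j. la j \<noteq> 0)"
    by blast
  then have "admits ml me \<sigma> {i. mu i \<noteq> 0} {j. la j \<noteq> 0}"
    unfolding admits_iff_support by blast
  then show "Iset ml me \<sigma> \<noteq> {}" by (rule Iset_below_admits) blast
qed

lemma IMF_nonempty_iff:
  "IMF ml me \<sigma> \<noteq> {} \<longleftrightarrow>
     (\<exists>mu la. (mu, la) \<in> Ccone ml me \<sigma> \<and> mu (ml+1) = 0 \<and> ((\<exists>i. mu i \<noteq> 0) \<or> (\<exists>j. la j \<noteq> 0)))"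
proof
  assume "IMF ml me \<sigma> \<noteq> {}"
  then obtain I J where "admits ml me \<sigma> I J" "ml + 1 \<notin> I"
    by (auto simp: IMF_def ISP_def Iset_def)
  then show "\<exists>mu la. (mu, la) \<in> Ccone ml me \<sigma> \<and> mu (ml+1) = 0 \<and> ((\<exists>i. mu i \<noteq> 0) \<or> (\<exists>j. la j \<noteq> 0))"
    by (auto simp: admits_iff_support)
next
  assume "\<exists>mu la. (mu, la) \<in> Ccone ml me \<sigma> \<and> mu (ml+1) = 0 \<and> ((\<exists>i. mu i \<noteq> 0) \<or> (\<exists>j. la j \<noteq> 0))"
  then obtain mu la where "(mu, la) \<in> Ccone ml me \<sigma>" "mu (ml+1) = 0"
      "(\<exists>i. mu i \<noteq> 0) \<or> (\<exists>j. la j \<noteq> 0)"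
    by blast
  then have "admits ml me \<sigma> {i. mu i \<noteq> 0} {j. la j \<noteq> 0}"
    unfolding admits_iff_support by blast
  then obtain I J where "(I, J) \<in> Iset ml me \<sigma>" "I \<subseteq> {i. mu i \<noteq> 0}"
    by (rule Iset_below_admits)
  with \<open>mu (ml+1) = 0\<close> show "IMF ml me \<sigma> \<noteq> {}"
    unfolding IMF_def ISP_def by blast
qed

text \<open>A smaller admissible pair avoiding \<open>ml + 1\<close> cannot exist: subtracting a suitable multiple of
  its realiser leaves the coefficient of \<open>ml + 1\<close> untouched and kills another coordinate.\<close>
lemma minimal_SP_admits_in_Iset:
  assumes adm: "admits ml me \<sigma> I J" "ml + 1 \<in> I"
    and min: "\<And>I' J'. admits ml me \<sigma> I' J' \<Longrightarrow> ml + 1 \<in> I' \<Longrightarrow> I' \<subseteq> I \<Longrightarrow> J' \<subseteq> J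
                \<Longrightarrow> I' = I \<and> J' = J"
  shows "(I, J) \<in> Iset ml me \<sigma>"
proof -
  have "I' = I \<and> J' = J" if adm': "admits ml me \<sigma> I' J'" "I' \<subseteq> I" "J' \<subseteq> J" for I' J'
  proof (cases "ml + 1 \<in> I'")
    case True
    with min adm' show ?thesis by blast
  next
    case False
    obtain mu la where x: "(mu, la) \<in> Ccone ml me \<sigma>" and I: "I = {i. mu i \<noteq> 0}" "J = {j. la j \<noteq> 0}"
      using adm(1) unfolding admits_iff_support by blast
    obtain nu ka where y: "(nu, ka) \<in> Ccone ml me \<sigma>" "(\<exists>i. nu i \<noteq> 0) \<or> (\<exists>j. ka j \<noteq> 0)"
      and I': "I' = {i. nu i \<noteq> 0}" "J' = {j. ka j \<noteq> 0}"
      using adm'(1) unfolding admits_iff_support by blast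
    obtain t where z: "(\<lambda>i. mu i - t * nu i, \<lambda>j. la j - t * ka j) \<in> Ccone ml me \<sigma>"
      and killed: "(\<exists>i. nu i \<noteq> 0 \<and> mu i = t * nu i) \<or> (\<exists>j. ka j \<noteq> 0 \<and> la j = t * ka j)"
      using Ccone_reduce_support[OF x y] by blast
    define I'' where "I'' = {i. mu i - t * nu i \<noteq> 0}"
    define J'' where "J'' = {j. la j - t * ka j \<noteq> 0}"
    have sub: "I'' \<subseteq> I" "J'' \<subseteq> J"
      using adm'(2,3) by (auto simp: I I' I''_def J''_def)
    have "nu (ml + 1) = 0" "mu (ml + 1) \<noteq> 0"
      using False adm(2) by (auto simp: I I')
    then have "ml + 1 \<in> I''" by (simp add: I''_def)
    then have "admits ml me \<sigma> I'' J''"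
      unfolding admits_iff_support I''_def J''_def using z by blast
    then have "I'' = I \<and> J'' = J" using \<open>ml + 1 \<in> I''\<close> sub by (rule min)
    moreover have "I'' \<noteq> I \<or> J'' \<noteq> J"
      using killed adm'(2,3) by (auto simp: I I' I''_def J''_def)
    ultimately show ?thesis by blast
  qed
  then show ?thesis unfolding Iset_def using adm(1) by blast
qed

lemma ISP_nonempty_iff:
  "ISP ml me \<sigma> \<noteq> {} \<longleftrightarrow> (\<exists>mu la. (mu, la) \<in> Ccone ml me \<sigma> \<and> 0 < mu (ml+1))"
proof
  assume "ISP ml me \<sigma> \<noteq> {}"
  then obtain I J where "admits ml me \<sigma> I J" "ml + 1 \<in> I" by (auto simp: ISP_def Iset_def)
  then obtain mu la where "(mu, la) \<in> Ccone ml me \<sigma>" "mu (ml+1) \<noteq> 0"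
    unfolding admits_iff_support by blast
  then show "\<exists>mu la. (mu, la) \<in> Ccone ml me \<sigma> \<and> 0 < mu (ml+1)"
    using Ccone_nonneg by (metis less_eq_real_def)
next
  assume "\<exists>mu la. (mu, la) \<in> Ccone ml me \<sigma> \<and> 0 < mu (ml+1)"
  then obtain mu la where "(mu, la) \<in> Ccone ml me \<sigma>" "0 < mu (ml+1)" by blast
  then have "admits ml me \<sigma> {i. mu i \<noteq> 0} {j. la j \<noteq> 0}" "ml + 1 \<in> {i. mu i \<noteq> 0}"
    unfolding admits_iff_support by force+
  then obtain I J where "(I, J) \<in> Iset ml me \<sigma>" "ml + 1 \<in> I"
  proof (rule obtain_minimal_admits[where P = "\<lambda>I _. ml + 1 \<in> I"])
    fix I J
    assume "admits ml me \<sigma> I J" "ml + 1 \<in> I"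
      and "\<And>I' J'. admits ml me \<sigma> I' J' \<Longrightarrow> ml + 1 \<in> I' \<Longrightarrow> I' \<subseteq> I \<Longrightarrow> J' \<subseteq> J
             \<Longrightarrow> I' = I \<and> J' = J"
    then have "(I, J) \<in> Iset ml me \<sigma>" by (rule minimal_SP_admits_in_Iset)
    then show thesis using \<open>ml + 1 \<in> I\<close> by (rule that)
  qed
  then show "ISP ml me \<sigma> \<noteq> {}" unfolding ISP_def by blast
qed

lemma JSP_iff:
  "\<sigma> \<in> JSP ml me \<longleftrightarrow>
     (\<forall>i. i \<notin> {1..ml+1} \<longrightarrow> fst \<sigma> i = 0) \<and> (\<forall>i. i \<notin> {1..ml} \<longrightarrow> fst (snd \<sigma>) i = 0) \<and>
     (\<forall>j. j \<notin> {1..me} \<longrightarrow> fst (snd (snd \<sigma>)) j = 0) \<and> (\<forall>j. j \<notin> {1..me} \<longrightarrow> snd (snd (snd \<sigma>)) j = 0)"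
  by (cases \<sigma>) (auto simp: JSP_def)

lemma continuous_on_fst_apply [continuous_intros]:
  "continuous_on S g \<Longrightarrow> continuous_on S (\<lambda>x. fst (g x) i)"
  by (rule continuous_on_product_then_coordinatewise) (intro continuous_intros)

lemma continuous_on_snd_apply [continuous_intros]:
  "continuous_on S g \<Longrightarrow> continuous_on S (\<lambda>x. snd (g x) i)"
  by (rule continuous_on_product_then_coordinatewise) (intro continuous_intros)

lemma closed_JSP: "closed (JSP ml me :: ('n::finite) jet set)"
proof -
  have "closed {\<sigma> :: 'n jet.
     (\<forall>i. i \<notin> {1..ml+1} \<longrightarrow> fst \<sigma> i = 0) \<and> (\<forall>i. i \<notin> {1..ml} \<longrightarrow> fst (snd \<sigma>) i = 0) \<and>
     (\<forall>j. j \<notin> {1..me} \<longrightarrow> fst (snd (snd \<sigma>)) j = 0) \<and> (\<forall>j. j \<notin> {1..me} \<longrightarrow> snd (snd (snd \<sigma>)) j = 0)}"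
    by (intro closed_Collect_conj closed_Collect_all closed_Collect_imp open_Collect_const
        closed_Collect_eq continuous_intros continuous_on_id)
  then show ?thesis by (simp only: JSP_iff [symmetric] Collect_mem_eq)
qed

text \<open>The complementarity condition \<open>mu i * alpha i = 0\<close> replaces the jet-dependent index set
  \<open>I0star\<close>, so that all conditions are closed in the jet and the multipliers jointly.\<close>
lemma Ccone_iff_closed_conditions:
  "(mu, la) \<in> Ccone ml me \<sigma> \<longleftrightarrow>
     (\<forall>i. i \<in> {1..ml} \<longrightarrow> fst (snd \<sigma>) i \<le> 0) \<and> (\<forall>i. 0 \<le> mu i) \<and>
     (\<forall>i. i \<notin> {1..ml+1} \<longrightarrow> mu i = 0) \<and> (\<forall>i. i \<in> {1..ml} \<longrightarrow> mu i * fst (snd \<sigma>) i = 0) \<and>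
     (\<forall>j. j \<notin> {1..me} \<longrightarrow> la j = 0) \<and>
     (\<Sum>i=1..ml+1. mu i *\<^sub>R fst \<sigma> i) + (\<Sum>j=1..me. la j *\<^sub>R fst (snd (snd \<sigma>)) j) = 0"
proof -
  obtain a al b be where \<sigma>: "\<sigma> = (a, al, b, be)" by (cases \<sigma>)
  have "i \<notin> I0star ml \<sigma> \<longleftrightarrow> i \<notin> {1..ml+1} \<or> (i \<in> {1..ml} \<and> al i \<noteq> 0)" for i
    by (auto simp: \<sigma> I0star_def I0_def)
  then have "(\<forall>i. i \<notin> I0star ml \<sigma> \<longrightarrow> mu i = 0) \<longleftrightarrow>
      (\<forall>i. i \<notin> {1..ml+1} \<longrightarrow> mu i = 0) \<and> (\<forall>i. i \<in> {1..ml} \<longrightarrow> mu i * al i = 0)"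
    by (simp only: mult_eq_0_iff) blast
  then show ?thesis by (simp add: \<sigma> Ccone_iff Ball_def)
qed

definition Ccone_graph :: "nat \<Rightarrow> nat \<Rightarrow> (('n::finite) jet \<times> (nat \<Rightarrow> real) \<times> (nat \<Rightarrow> real)) set" where
  "Ccone_graph ml me = {(\<sigma>, mu, la). \<sigma> \<in> JSP ml me \<and> (mu, la) \<in> Ccone ml me \<sigma>}"

lemma closed_Ccone_graph: "closed (Ccone_graph ml me)"
proof -
  have JSP: "closed {p :: ('n::finite) jet \<times> _. fst p \<in> JSP ml me}"
    using closed_vimage[OF closed_JSP continuous_on_fst[OF continuous_on_id]] by (simp add: vimage_def)
  have "Ccone_graph ml me = {p. fst p \<in> JSP ml me \<and>
     (\<forall>i. i \<in> {1..ml} \<longrightarrow> fst (snd (fst p)) i \<le> 0) \<and> (\<forall>i. 0 \<le> fst (snd p) i) \<and>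
     (\<forall>i. i \<notin> {1..ml+1} \<longrightarrow> fst (snd p) i = 0) \<and>
     (\<forall>i. i \<in> {1..ml} \<longrightarrow> fst (snd p) i * fst (snd (fst p)) i = 0) \<and>
     (\<forall>j. j \<notin> {1..me} \<longrightarrow> snd (snd p) j = 0) \<and>
     (\<Sum>i=1..ml+1. fst (snd p) i *\<^sub>R fst (fst p) i)
       + (\<Sum>j=1..me. snd (snd p) j *\<^sub>R fst (snd (snd (fst p))) j) = 0}"
    by (auto simp: Ccone_graph_def Ccone_iff_closed_conditions)
  also have "closed \<dots>"
    by (intro closed_Collect_conj JSP closed_Collect_all closed_Collect_imp open_Collect_const
        closed_Collect_eq closed_Collect_le continuous_intros continuous_on_id)
  finally show ?thesis .
qed

lemma compact_unit_box_nat: "compact {f :: nat \<Rightarrow> real. \<forall>i. \<bar>f i\<bar> \<le> 1}"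
proof -
  have "compactin (product_topology (\<lambda>_. euclidean) UNIV) (Pi\<^sub>E UNIV (\<lambda>_::nat. {-1..1::real}))"
    by (subst compactin_PiE) simp
  moreover have "Pi\<^sub>E UNIV (\<lambda>_::nat. {-1..1::real}) = {f. \<forall>i. \<bar>f i\<bar> \<le> 1}"
    by (auto simp: PiE_iff abs_le_iff)
  ultimately show ?thesis
    by (simp add: euclidean_product_topology compactin_euclidean_iff)
qed

text \<open>The box constraint only serves
  compactness in the product topology: multipliers in \<open>Ccone\<close> vanish outside those indices.\<close>
definition unit_multipliers :: "nat \<Rightarrow> nat \<Rightarrow> ((nat \<Rightarrow> real) \<times> (nat \<Rightarrow> real)) set" where
  "unit_multipliers ml me = {(mu, la). (\<forall>i. \<bar>mu i\<bar> \<le> 1) \<and> (\<forall>j. \<bar>la j\<bar> \<le> 1) \<and>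
      (\<Sum>i=1..ml+1. \<bar>mu i\<bar>) + (\<Sum>j=1..me. \<bar>la j\<bar>) = 1}"

lemma compact_unit_multipliers: "compact (unit_multipliers ml me)"
proof -
  have "unit_multipliers ml me =
      ({f. \<forall>i. \<bar>f i\<bar> \<le> 1} \<times> {f. \<forall>i. \<bar>f i\<bar> \<le> 1})
      \<inter> {x. (\<Sum>i=1..ml+1. \<bar>fst x i\<bar>) + (\<Sum>j=1..me. \<bar>snd x j\<bar>) = 1}"
    by (auto simp: unit_multipliers_def)
  moreover have "closed {x :: (nat \<Rightarrow> real) \<times> (nat \<Rightarrow> real).
      (\<Sum>i=1..ml+1. \<bar>fst x i\<bar>) + (\<Sum>j=1..me. \<bar>snd x j\<bar>) = 1}"
    by (intro closed_Collect_eq continuous_intros continuous_on_id)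
  ultimately show ?thesis
    using compact_Int_closed[OF compact_Times[OF compact_unit_box_nat compact_unit_box_nat]] by simp
qed

lemma unit_multipliers_nonzero:
  assumes "(mu, la) \<in> unit_multipliers ml me"
  shows "(\<exists>i. mu i \<noteq> 0) \<or> (\<exists>j. la j \<noteq> 0)"
proof (rule ccontr)
  assume "\<not> ?thesis"
  then have "mu = (\<lambda>_. 0)" "la = (\<lambda>_. 0)" by auto
  with assms show False by (simp add: unit_multipliers_def)
qed

lemma Ccone_normalize:
  assumes x: "(mu, la) \<in> Ccone ml me \<sigma>" and nz: "(\<exists>i. mu i \<noteq> 0) \<or> (\<exists>j. la j \<noteq> 0)"
  obtains r where "0 < r" "(\<lambda>i. r * mu i, \<lambda>j. r * la j) \<in> Ccone ml me \<sigma>"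
    "(\<lambda>i. r * mu i, \<lambda>j. r * la j) \<in> unit_multipliers ml me"
proof -
  define s where "s = (\<Sum>i=1..ml+1. \<bar>mu i\<bar>) + (\<Sum>j=1..me. \<bar>la j\<bar>)"
  have sums: "0 \<le> (\<Sum>i=1..ml+1. \<bar>mu i\<bar>)" "0 \<le> (\<Sum>j=1..me. \<bar>la j\<bar>)"
    by (auto intro: sum_nonneg)
  have mu_le: "\<bar>mu i\<bar> \<le> s" for i
  proof (cases "mu i = 0")
    case False
    then have "i \<in> {1..ml+1}" using Ccone_mu_support[OF x] I0star_subset by blast
    then have "\<bar>mu i\<bar> \<le> (\<Sum>i=1..ml+1. \<bar>mu i\<bar>)" by (intro member_le_sum) auto
    with sums show ?thesis unfolding s_def by linarith
  qed (use sums in \<open>simp add: s_def\<close>)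
  have la_le: "\<bar>la j\<bar> \<le> s" for j
  proof (cases "la j = 0")
    case False
    then have "j \<in> {1..me}" using Ccone_la_support[OF x] by blast
    then have "\<bar>la j\<bar> \<le> (\<Sum>j=1..me. \<bar>la j\<bar>)" by (intro member_le_sum) auto
    with sums show ?thesis unfolding s_def by linarith
  qed (use sums in \<open>simp add: s_def\<close>)
  have "0 < s"
    using nz mu_le la_le by (smt (verit))
  show thesis
  proof (rule that[of "1 / s"])
    show "0 < 1 / s" using \<open>0 < s\<close> by simp
    show "(\<lambda>i. 1 / s * mu i, \<lambda>j. 1 / s * la j) \<in> Ccone ml me \<sigma>"
      using Ccone_lincomb[OF x x, of "1 / s" 0] Ccone_nonneg[OF x] \<open>0 < s\<close> by simp
    have abs: "\<bar>1 / s * y\<bar> = 1 / s * \<bar>y\<bar>" for y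
      using \<open>0 < s\<close> by (simp add: abs_mult)
    have "(\<Sum>i=1..ml+1. \<bar>1 / s * mu i\<bar>) + (\<Sum>j=1..me. \<bar>1 / s * la j\<bar>) = 1 / s * s"
      by (simp only: abs flip: sum_distrib_left distrib_left s_def)
    then show "(\<lambda>i. 1 / s * mu i, \<lambda>j. 1 / s * la j) \<in> unit_multipliers ml me"
      using mu_le la_le \<open>0 < s\<close> by (simp add: unit_multipliers_def abs_mult)
  qed
qed

lemma closed_fst_image_compact:
  fixes T :: "('a::topological_space \<times> 'b::topological_space) set"
  assumes "closed T" "compact K"
  shows "closed (fst ` (T \<inter> UNIV \<times> K))"
proof -
  have "compact_space (subtopology euclidean K)"
    using assms(2) by (simp add: compact_space_subtopology compactin_euclidean_iff)
  then have "closed_map (prod_topology euclidean (subtopology euclidean K)) euclidean fst"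
    by (rule closed_map_fst)
  moreover have "prod_topology euclidean (subtopology euclidean K) = subtopology euclidean (UNIV \<times> K)"
    by (subst prod_topology_subtopology(2)) (simp only: prod_topology_euclidean topspace_euclidean)
  moreover have "closedin (subtopology euclidean (UNIV \<times> K)) (T \<inter> UNIV \<times> K)"
    using closedin_closed_Int[OF assms(1)] by (subst Int_commute)
  ultimately have "closedin euclidean (fst ` (T \<inter> UNIV \<times> K))"
    unfolding closed_map_def by metis
  then show ?thesis by (simp only: closed_closedin)
qed

lemma fst_image_Ccone_graph_unit_multipliers:
  assumes cone: "\<And>mu la r. (mu, la) \<in> Z \<Longrightarrow> 0 < r \<Longrightarrow> (\<lambda>i. r * mu i, \<lambda>j. r * la j) \<in> Z"
  shows "fst ` (Ccone_graph ml me \<inter> UNIV \<times> (unit_multipliers ml me \<inter> Z)) =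
    {\<sigma> \<in> JSP ml me. \<exists>mu la. (mu, la) \<in> Ccone ml me \<sigma> \<and> (mu, la) \<in> Z \<and>
                              ((\<exists>i. mu i \<noteq> 0) \<or> (\<exists>j. la j \<noteq> 0))}"
proof (intro set_eqI iffI)
  fix \<sigma> assume "\<sigma> \<in> fst ` (Ccone_graph ml me \<inter> UNIV \<times> (unit_multipliers ml me \<inter> Z))"
  then obtain mu la where "\<sigma> \<in> JSP ml me" "(mu, la) \<in> Ccone ml me \<sigma>" "(mu, la) \<in> Z"
    "(mu, la) \<in> unit_multipliers ml me"
    by (auto simp: Ccone_graph_def)
  then show "\<sigma> \<in> {\<sigma> \<in> JSP ml me. \<exists>mu la. (mu, la) \<in> Ccone ml me \<sigma> \<and> (mu, la) \<in> Z \<and>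
                              ((\<exists>i. mu i \<noteq> 0) \<or> (\<exists>j. la j \<noteq> 0))}"
    using unit_multipliers_nonzero by blast
next
  fix \<sigma> assume "\<sigma> \<in> {\<sigma> \<in> JSP ml me. \<exists>mu la. (mu, la) \<in> Ccone ml me \<sigma> \<and> (mu, la) \<in> Z \<and>
                              ((\<exists>i. mu i \<noteq> 0) \<or> (\<exists>j. la j \<noteq> 0))}"
  then obtain mu la where \<sigma>: "\<sigma> \<in> JSP ml me" and x: "(mu, la) \<in> Ccone ml me \<sigma>" "(mu, la) \<in> Z"
    "(\<exists>i. mu i \<noteq> 0) \<or> (\<exists>j. la j \<noteq> 0)"
    by blast
  obtain r where "0 < r" "(\<lambda>i. r * mu i, \<lambda>j. r * la j) \<in> Ccone ml me \<sigma>"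
    "(\<lambda>i. r * mu i, \<lambda>j. r * la j) \<in> unit_multipliers ml me"
    using Ccone_normalize[OF x(1,3)] by blast
  with \<sigma> cone[OF x(2)] have "(\<sigma>, (\<lambda>i. r * mu i, \<lambda>j. r * la j))
      \<in> Ccone_graph ml me \<inter> UNIV \<times> (unit_multipliers ml me \<inter> Z)"
    by (simp add: Ccone_graph_def)
  then show "\<sigma> \<in> fst ` (Ccone_graph ml me \<inter> UNIV \<times> (unit_multipliers ml me \<inter> Z))"
    by (rule rev_image_eqI) simp
qed

lemma closed_chiSP_Un_chiMF: "closed (chiSP ml me \<union> chiMF ml me :: ('n::finite) jet set)"
proof -
  have "chiSP ml me \<union> chiMF ml me = {\<sigma> :: 'n jet \<in> JSP ml me. Iset ml me \<sigma> \<noteq> {}}"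
    by (auto simp: chiSP_def chiMF_def IMF_def ISP_def)
  also have "\<dots> = fst ` (Ccone_graph ml me \<inter> UNIV \<times> (unit_multipliers ml me \<inter> UNIV))"
    by (subst fst_image_Ccone_graph_unit_multipliers) (auto simp: Iset_nonempty_iff)
  finally have eq: "chiSP ml me \<union> chiMF ml me =
      fst ` (Ccone_graph ml me \<inter> UNIV \<times> unit_multipliers ml me :: ('n jet \<times> _) set)"
    by simp
  show ?thesis
    unfolding eq by (intro closed_fst_image_compact closed_Ccone_graph compact_unit_multipliers)
qed

lemma closed_chiMF: "closed (chiMF ml me :: ('n::finite) jet set)"
proof -
  define Z where "Z = {x :: (nat \<Rightarrow> real) \<times> (nat \<Rightarrow> real). fst x (ml+1) = 0}"
  have eq: "chiMF ml me = fst ` (Ccone_graph ml me \<inter> UNIV \<times> (unit_multipliers ml me \<inter> Z))"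
    by (subst fst_image_Ccone_graph_unit_multipliers) (auto simp: Z_def chiMF_def IMF_nonempty_iff)
  have "compact (unit_multipliers ml me \<inter> Z)"
    unfolding Z_def by (intro compact_Int_closed compact_unit_multipliers closed_Collect_eq
        continuous_intros continuous_on_id)
  then show ?thesis
    unfolding eq by (intro closed_fst_image_compact closed_Ccone_graph)
qed

lemma continuous_limit_at_0_in_closure:
  fixes f :: "real \<Rightarrow> 'a::topological_space"
  assumes "continuous_on {0..} f" and "\<And>d. 0 < d \<Longrightarrow> f d \<in> S"
  shows "f 0 \<in> closure S"
proof -
  have "f ` closure {0<..} \<subseteq> closure S"
    using assms closure_subset by (intro image_closure_subset) auto
  then show ?thesis by auto
qed

lemma obtain_perturbation_direction:
  assumes x: "(mu, la) \<in> Ccone ml me \<sigma>" and "mu (ml+1) = 0"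
    and nz: "(\<exists>i. mu i \<noteq> 0) \<or> (\<exists>j. la j \<noteq> 0)"
  obtains da db :: "nat \<Rightarrow> 'a::real_vector"
  where "\<And>i. i \<notin> {1..ml} \<Longrightarrow> da i = 0" "\<And>j. j \<notin> {1..me} \<Longrightarrow> db j = 0"
    and "(\<Sum>i=1..ml+1. mu i *\<^sub>R da i) + (\<Sum>j=1..me. la j *\<^sub>R db j) = c"
  using nz
proof (elim disjE exE)
  fix k assume "mu k \<noteq> 0"
  then have k: "k \<in> {1..ml}"
    using Ccone_mu_support[OF x] \<open>mu (ml+1) = 0\<close> by (fastforce simp: I0star_def I0_def)
  define da where "da i = (if i = k then (1 / mu k) *\<^sub>R c else 0)" for i
  have "(\<Sum>i=1..ml+1. mu i *\<^sub>R da i) = (\<Sum>i=1..ml+1. if i = k then c else 0)"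
    using \<open>mu k \<noteq> 0\<close> by (intro sum.cong) (auto simp: da_def)
  also have "\<dots> = c" using k by simp
  finally show thesis
    using k by (intro that[of da "\<lambda>_. 0"]) (auto simp: da_def)
next
  fix k assume "la k \<noteq> 0"
  then have k: "k \<in> {1..me}" using Ccone_la_support[OF x] by blast
  define db where "db j = (if j = k then (1 / la k) *\<^sub>R c else 0)" for j
  have "(\<Sum>j=1..me. la j *\<^sub>R db j) = (\<Sum>j=1..me. if j = k then c else 0)"
    using \<open>la k \<noteq> 0\<close> by (intro sum.cong) (auto simp: db_def)
  also have "\<dots> = c" using k by simp
  finally show thesis
    using k by (intro that[of "\<lambda>_. 0" db]) (auto simp: db_def)
qed

text \<open>Moving the constraint gradients along a direction \<open>(da, db)\<close> whose combination with the
  multipliers is \<open>a (ml + 1)\<close> lets the multiplier of \<open>ml + 1\<close> become positive.\<close>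
lemma perturbed_jet_in_chiSP:
  assumes \<sigma>: "(a, al, b, be) \<in> JSP ml me" and x: "(mu, la) \<in> Ccone ml me (a, al, b, be)"
    and "mu (ml+1) = 0"
    and da: "\<And>i. i \<notin> {1..ml} \<Longrightarrow> da i = 0" and db: "\<And>j. j \<notin> {1..me} \<Longrightarrow> db j = 0"
    and dir: "(\<Sum>i=1..ml+1. mu i *\<^sub>R da i) + (\<Sum>j=1..me. la j *\<^sub>R db j) = a (ml+1)"
    and "0 < d"
  shows "(\<lambda>i. a i - d *\<^sub>R da i, al, \<lambda>j. b j - d *\<^sub>R db j, be) \<in> chiSP ml me"
proof -
  define a' where "a' i = a i - d *\<^sub>R da i" for i
  define b' where "b' j = b j - d *\<^sub>R db j" for j
  define mu' where "mu' = mu(ml+1 := d)"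
  have upd: "(\<Sum>i=1..ml+1. mu' i *\<^sub>R v i) = (\<Sum>i=1..ml+1. mu i *\<^sub>R v i) + d *\<^sub>R v (ml+1)"
    for v :: "nat \<Rightarrow> real^'n"
  proof -
    have "(\<Sum>i=1..ml+1. mu' i *\<^sub>R v i) = (\<Sum>i=1..ml+1. mu i *\<^sub>R v i + (if i = ml+1 then d *\<^sub>R v i else 0))"
      using \<open>mu (ml+1) = 0\<close> by (intro sum.cong) (auto simp: mu'_def)
    then show ?thesis by (simp add: sum.distrib)
  qed
  have sum0: "(\<Sum>i=1..ml+1. mu i *\<^sub>R a i) + (\<Sum>j=1..me. la j *\<^sub>R b j) = 0"
    using x by (simp add: Ccone_iff)
  have lin: "(\<Sum>i\<in>S. c i *\<^sub>R (v i - d *\<^sub>R w i)) = (\<Sum>i\<in>S. c i *\<^sub>R v i) - d *\<^sub>R (\<Sum>i\<in>S. c i *\<^sub>R w i)"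
    for S and c :: "nat \<Rightarrow> real" and v w :: "nat \<Rightarrow> real^'n"
    by (simp add: scaleR_diff_right sum_subtractf scaleR_right.sum mult.commute)
  have a'_top: "a' (ml+1) = a (ml+1)" using da[of "ml+1"] by (simp add: a'_def)
  have "(\<Sum>i=1..ml+1. mu' i *\<^sub>R a' i) + (\<Sum>j=1..me. la j *\<^sub>R b' j)
      = (\<Sum>i=1..ml+1. mu i *\<^sub>R a' i) + (\<Sum>j=1..me. la j *\<^sub>R b' j) + d *\<^sub>R a (ml+1)"
    by (simp only: upd a'_top) (simp only: ac_simps)
  also have "\<dots> = ((\<Sum>i=1..ml+1. mu i *\<^sub>R a i) + (\<Sum>j=1..me. la j *\<^sub>R b j))
        - d *\<^sub>R ((\<Sum>i=1..ml+1. mu i *\<^sub>R da i) + (\<Sum>j=1..me. la j *\<^sub>R db j)) + d *\<^sub>R a (ml+1)"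
    unfolding a'_def b'_def lin by (simp add: scaleR_right_distrib algebra_simps)
  also have "\<dots> = 0" by (simp only: sum0 dir) simp
  finally have "(mu', la) \<in> Ccone ml me (a', al, b', be)"
    using x \<open>0 < d\<close> by (auto simp: Ccone_iff mu'_def I0star_def I0_def)
  moreover have "0 < mu' (ml+1)" using \<open>0 < d\<close> by (simp add: mu'_def)
  moreover have "(a', al, b', be) \<in> JSP ml me"
    using \<sigma> da db by (auto simp: JSP_def a'_def b'_def)
  ultimately show ?thesis
    unfolding chiSP_def a'_def b'_def using ISP_nonempty_iff by blast
qed

lemma chiMF_subset_closure_chiSP: "chiMF ml me \<subseteq> closure (chiSP ml me :: ('n::finite) jet set)"
proof
  fix \<sigma> :: "'n jet" assume "\<sigma> \<in> chiMF ml me"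
  obtain a al b be where \<sigma>_eq: "\<sigma> = (a, al, b, be)" by (cases \<sigma>)
  obtain mu la where x: "(mu, la) \<in> Ccone ml me \<sigma>" "mu (ml+1) = 0"
      "(\<exists>i. mu i \<noteq> 0) \<or> (\<exists>j. la j \<noteq> 0)"
    using \<open>\<sigma> \<in> chiMF ml me\<close> by (auto simp: chiMF_def IMF_nonempty_iff)
  obtain da db where dir: "\<And>i. i \<notin> {1..ml} \<Longrightarrow> da i = 0" "\<And>j. j \<notin> {1..me} \<Longrightarrow> db j = 0"
    "(\<Sum>i=1..ml+1. mu i *\<^sub>R da i) + (\<Sum>j=1..me. la j *\<^sub>R db j) = a (ml+1)"
    using obtain_perturbation_direction[OF x, where c = "a (ml+1)"] by blast
  define f where "f d = (\<lambda>i. a i - d *\<^sub>R da i, al, \<lambda>j. b j - d *\<^sub>R db j, be)" for d :: real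
  have "continuous_on {0..} f"
    unfolding f_def by (intro continuous_intros continuous_on_coordinatewise_then_product)
  moreover have "f d \<in> chiSP ml me" if "0 < d" for d
    unfolding f_def using \<open>\<sigma> \<in> chiMF ml me\<close> x dir that
    by (intro perturbed_jet_in_chiSP) (auto simp: \<sigma>_eq chiMF_def)
  ultimately have "f 0 \<in> closure (chiSP ml me)" by (rule continuous_limit_at_0_in_closure)
  then show "\<sigma> \<in> closure (chiSP ml me)" by (simp add: f_def \<sigma>_eq)
qed

theorem mainTheorem7:
  fixes ml me :: nat
  shows "closed (chiMF ml me :: ('n::finite) jet set)
       \<and> closed (chiSP ml me \<union> chiMF ml me :: ('n::finite) jet set)
       \<and> (chiMF ml me :: ('n::finite) jet set) \<subseteq> closure (chiSP ml me)
       \<and> closure (chiSP ml me :: ('n::finite) jet set) = chiSP ml me \<union> chiMF ml me"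
proof (intro conjI)
  show "closed (chiMF ml me :: 'n jet set)" by (rule closed_chiMF)
  show "closed (chiSP ml me \<union> chiMF ml me :: 'n jet set)" by (rule closed_chiSP_Un_chiMF)
  show "chiMF ml me \<subseteq> closure (chiSP ml me :: 'n jet set)" by (rule chiMF_subset_closure_chiSP)
  show "closure (chiSP ml me :: 'n jet set) = chiSP ml me \<union> chiMF ml me"
  proof (rule antisym)
    show "closure (chiSP ml me) \<subseteq> chiSP ml me \<union> (chiMF ml me :: 'n jet set)"
      by (rule closure_minimal[OF Un_upper1 closed_chiSP_Un_chiMF])
    show "chiSP ml me \<union> chiMF ml me \<subseteq> closure (chiSP ml me :: 'n jet set)"
      using closure_subset chiMF_subset_closure_chiSP by (rule Un_least)
  qed
qed

end
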